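(* Let $\rho=(r_n)_n$ be an increasing sequence in $[0,1)$ with $r_n\to 1$. Let $\gamma_1,\gamma_2:[0,1)\to\mathbb{D}$ be two disjoint paths with $\gamma_1(r)\to\zeta_1$ and $\gamma_2(r)\to\zeta_2$ as $r\to1$, where $\zeta_1\neq\zeta_2$ are points of $\mathbb{T}$. Let $h$ be a positive harmonic function on $\mathbb{D}$. Then there is no $f\in\mathcal{U}_A(\mathbb{D},\rho)$ such that $|f|\le e^h$ on $\gamma_1\cup\gamma_2$.
   Context: $\mathbb{D}$ is the open unit disc, $\mathbb{T}$ the unit circle. For $f\in H(\mathbb{D})$, $f_r(z):=f(rz)$; $\mathcal{U}_A(\mathbb{D},\rho)$ is the set of $f\in H(\mathbb{D})$ such that for every compact $K\subset\mathbb{T}$, $K\neq\mathbb{T}$, and every continuous $\varphi$ on $K$ there is an increasing sequence $(n_k)$ with $\sup_{\zeta\in K}|f_{r_{n_k}}(\zeta)-\varphi(\zeta)|\to0$. *)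

theory Defs
  imports "HOL-Analysis.Analysis"
begin

text \<open>Harmonic functions on an open set S of the plane (identified with complex):
  h is C^2 (twice Frechet differentiable with continuous second derivative) and its
  Laplacian h_xx + h_yy vanishes.\<close>
definition harmonic_on :: "(complex \<Rightarrow> real) \<Rightarrow> complex set \<Rightarrow> bool" where
  "harmonic_on h S \<longleftrightarrow> open S \<and>
     (\<exists>(Dh :: complex \<Rightarrow> (complex \<Rightarrow>\<^sub>L real)) (D2h :: complex \<Rightarrow> (complex \<Rightarrow>\<^sub>L (complex \<Rightarrow>\<^sub>L real))).
        (\<forall>z\<in>S. (h has_derivative blinfun_apply (Dh z)) (at z)) \<and>
        (\<forall>z\<in>S. (Dh has_derivative blinfun_apply (D2h z)) (at z)) \<and>
        continuous_on S D2h \<and>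
        (\<forall>z\<in>S. blinfun_apply (blinfun_apply (D2h z) 1) 1
               + blinfun_apply (blinfun_apply (D2h z) \<i>) \<i> = 0))"

definition U_A :: "(nat \<Rightarrow> real) \<Rightarrow> (complex \<Rightarrow> complex) set" where
  "U_A r = {f. f holomorphic_on ball 0 1 \<and>
     (\<forall>K \<phi>. compact K \<and> K \<subseteq> sphere 0 1 \<and> K \<noteq> sphere 0 1 \<and> continuous_on K \<phi> \<longrightarrow>
        (\<exists>n::nat \<Rightarrow> nat. strict_mono n \<and>
           (\<forall>\<epsilon>>0. \<forall>\<^sub>F k in sequentially. \<forall>\<zeta>\<in>K.
               norm (f (complex_of_real (r (n k)) * \<zeta>) - \<phi> \<zeta>) < \<epsilon>)))}"

end

theory Submission
  imports Defs "HOL-Complex_Analysis.Complex_Analysis"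
begin

text \<open>
  Write \<open>h = Re g\<close> with \<open>g\<close> holomorphic on the disc and put \<open>G = exp (- g)\<close>, so that
  \<open>|G| \<le> 1\<close>, \<open>G 0 \<noteq> 0\<close> and \<open>|f G| \<le> 1\<close> on both curves. An arc of the unit circle
  from \<open>\<zeta>1\<close> to \<open>\<zeta>2\<close>, together with an arc running through \<open>\<gamma>1\<close>, the segment
  joining \<open>\<gamma>1 0\<close> to \<open>\<gamma>2 0\<close>, and \<open>\<gamma>2\<close>, bounds a Jordan domain \<open>\<Omega>\<close> in the disc.
  Letting dilates of \<open>f\<close> approximate \<open>0\<close> on the circle minus a neighbourhood of a point
  outside the closure of \<open>\<Omega>\<close>, the maximum principle on \<open>\<Omega> \<inter> ball 0 (r n)\<close> bounds
  \<open>f G\<close> on \<open>\<Omega>\<close>. Letting them approximate a large constant on a closed arc of the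
  circle lying in the boundary of \<open>\<Omega>\<close> then makes \<open>G\<close> uniformly small on concentric
  arcs of radius close to \<open>1\<close>. Finitely many rotations of such an arc cover a whole circle,
  so the product of the corresponding rotations of \<open>G\<close> is small at \<open>0\<close>, although it
  equals a power of \<open>G 0\<close> there.
\<close>

section \<open>Harmonic conjugates\<close>

lemma second_difference_mvt:
  fixes h :: "'a::real_normed_vector \<Rightarrow> real" and Dh :: "'a \<Rightarrow> ('a \<Rightarrow>\<^sub>L real)"
    and D2h :: "'a \<Rightarrow> ('a \<Rightarrow>\<^sub>L ('a \<Rightarrow>\<^sub>L real))"
  assumes d1: "\<And>w. w \<in> ball z R \<Longrightarrow> (h has_derivative blinfun_apply (Dh w)) (at w)"
    and d2: "\<And>w. w \<in> ball z R \<Longrightarrow> (Dh has_derivative blinfun_apply (D2h w)) (at w)"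
    and t: "0 < t" "t * (norm a + norm b) < R"
  shows "\<exists>\<xi>. dist \<xi> z \<le> t * (norm a + norm b) \<and>
     h (z + t *\<^sub>R a + t *\<^sub>R b) - h (z + t *\<^sub>R a) - h (z + t *\<^sub>R b) + h z
       = t\<^sup>2 * blinfun_apply (blinfun_apply (D2h \<xi>) b) a"
proof -
  have near: "dist (z + u *\<^sub>R a + v *\<^sub>R b) z \<le> t * (norm a + norm b)"
    if "0 \<le> u" "u \<le> t" "0 \<le> v" "v \<le> t" for u v
  proof -
    have "norm (u *\<^sub>R a + v *\<^sub>R b) \<le> u * norm a + v * norm b"
      using that norm_triangle_ineq[of "u *\<^sub>R a" "v *\<^sub>R b"] by simp
    also have "\<dots> \<le> t * (norm a + norm b)"
      using that by (simp add: distrib_left add_mono mult_right_mono)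
    finally show ?thesis by (simp add: dist_norm add.assoc)
  qed
  have inb: "z + u *\<^sub>R a + v *\<^sub>R b \<in> ball z R" if "0 \<le> u" "u \<le> t" "0 \<le> v" "v \<le> t" for u v
    using near[OF that] t by (simp add: dist_commute)
  have dh: "((\<lambda>s. h (z + s *\<^sub>R a + v *\<^sub>R b)) has_real_derivative
      blinfun_apply (Dh (z + s *\<^sub>R a + v *\<^sub>R b)) a) (at s)"
    if "0 \<le> s" "s \<le> t" "0 \<le> v" "v \<le> t" for s v
  proof -
    have "((\<lambda>s. h (z + s *\<^sub>R a + v *\<^sub>R b)) has_derivative
        (\<lambda>x. blinfun_apply (Dh (z + s *\<^sub>R a + v *\<^sub>R b)) (x *\<^sub>R a))) (at s)"
      by (rule has_derivative_compose[where f="\<lambda>s. z + s *\<^sub>R a + v *\<^sub>R b",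
            OF _ d1[OF inb[OF that]]])
         (auto intro!: derivative_eq_intros)
    then show ?thesis
      unfolding has_field_derivative_def
      by (rule has_derivative_eq_rhs) (simp add: fun_eq_iff blinfun.scaleR_right)
  qed
  define \<phi> where "\<phi> u = h (z + u *\<^sub>R a + t *\<^sub>R b) - h (z + u *\<^sub>R a)" for u
  have D\<phi>: "(\<phi> has_real_derivative
      blinfun_apply (Dh (z + u *\<^sub>R a + t *\<^sub>R b)) a - blinfun_apply (Dh (z + u *\<^sub>R a)) a) (at u)"
    if "0 \<le> u" "u \<le> t" for u
    using DERIV_diff[OF dh[OF that _ order_refl] dh[OF that order_refl]] t(1)
    unfolding \<phi>_def by simp
  obtain u where u: "0 < u" "u < t" "\<phi> t - \<phi> 0 = t *
      (blinfun_apply (Dh (z + u *\<^sub>R a + t *\<^sub>R b)) a - blinfun_apply (Dh (z + u *\<^sub>R a)) a)"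
    using MVT2[OF t(1) D\<phi>] by auto
  define \<psi> where "\<psi> v = blinfun_apply (Dh (z + u *\<^sub>R a + v *\<^sub>R b)) a" for v
  have D\<psi>: "(\<psi> has_real_derivative
      blinfun_apply (blinfun_apply (D2h (z + u *\<^sub>R a + v *\<^sub>R b)) b) a) (at v)"
    if "0 \<le> v" "v \<le> t" for v
  proof -
    have "((\<lambda>v. Dh (z + u *\<^sub>R a + v *\<^sub>R b)) has_derivative
        (\<lambda>x. blinfun_apply (D2h (z + u *\<^sub>R a + v *\<^sub>R b)) (x *\<^sub>R b))) (at v)"
      using u
      by (intro has_derivative_compose[where f="\<lambda>v. z + u *\<^sub>R a + v *\<^sub>R b",
            OF _ d2[OF inb[OF _ _ that]]])
         (auto intro!: derivative_eq_intros)
    then have "(\<psi> has_derivative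
        (\<lambda>x. blinfun_apply (blinfun_apply (D2h (z + u *\<^sub>R a + v *\<^sub>R b)) (x *\<^sub>R b)) a)) (at v)"
      unfolding \<psi>_def by (rule bounded_linear.has_derivative[OF blinfun.bounded_linear_left])
    then show ?thesis
      unfolding has_field_derivative_def
      by (rule has_derivative_eq_rhs)
         (simp add: fun_eq_iff blinfun.scaleR_right blinfun.scaleR_left)
  qed
  obtain v where v: "0 < v" "v < t"
      "\<psi> t - \<psi> 0 = t * blinfun_apply (blinfun_apply (D2h (z + u *\<^sub>R a + v *\<^sub>R b)) b) a"
    using MVT2[OF t(1) D\<psi>] by auto
  show ?thesis
  proof (intro exI conjI)
    show "dist (z + u *\<^sub>R a + v *\<^sub>R b) z \<le> t * (norm a + norm b)"
      using near u v by simp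
    show "h (z + t *\<^sub>R a + t *\<^sub>R b) - h (z + t *\<^sub>R a) - h (z + t *\<^sub>R b) + h z =
        t\<^sup>2 * blinfun_apply (blinfun_apply (D2h (z + u *\<^sub>R a + v *\<^sub>R b)) b) a"
    proof -
      have "h (z + t *\<^sub>R a + t *\<^sub>R b) - h (z + t *\<^sub>R a) - h (z + t *\<^sub>R b) + h z = \<phi> t - \<phi> 0"
        by (simp add: \<phi>_def)
      also have "\<dots> = t * (\<psi> t - \<psi> 0)"
        using u(3) by (simp add: \<psi>_def)
      also have "\<dots> = t\<^sup>2 * blinfun_apply (blinfun_apply (D2h (z + u *\<^sub>R a + v *\<^sub>R b)) b) a"
        using v(3) by (simp add: power2_eq_square)
      finally show ?thesis .
    qed
  qed
qed

lemma tendsto_through_nearby_points: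
  fixes \<phi> :: "'a::metric_space \<Rightarrow> 'b::metric_space"
  assumes "isCont \<phi> z" "(\<rho> \<longlongrightarrow> 0) F"
    and "\<forall>\<^sub>F t in F. \<exists>\<xi>. dist \<xi> z \<le> \<rho> t \<and> q t = \<phi> \<xi>"
  shows "(q \<longlongrightarrow> \<phi> z) F"
proof (rule tendstoI)
  fix e :: real assume "e > 0"
  then obtain d where d: "d > 0" "\<And>\<xi>. dist \<xi> z < d \<Longrightarrow> dist (\<phi> \<xi>) (\<phi> z) < e"
    using assms(1) unfolding continuous_at_eps_delta by blast
  from assms(3) order_tendstoD(2)[OF assms(2) d(1)]
  show "\<forall>\<^sub>F t in F. dist (q t) (\<phi> z) < e"
    by eventually_elim (use d in force)
qed

lemma second_derivative_symmetric:
  fixes h :: "'a::real_normed_vector \<Rightarrow> real" and Dh :: "'a \<Rightarrow> ('a \<Rightarrow>\<^sub>L real)"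
    and D2h :: "'a \<Rightarrow> ('a \<Rightarrow>\<^sub>L ('a \<Rightarrow>\<^sub>L real))"
  assumes S: "open S" "z \<in> S"
    and d1: "\<And>w. w \<in> S \<Longrightarrow> (h has_derivative blinfun_apply (Dh w)) (at w)"
    and d2: "\<And>w. w \<in> S \<Longrightarrow> (Dh has_derivative blinfun_apply (D2h w)) (at w)"
    and cont: "continuous_on S D2h"
  shows "blinfun_apply (blinfun_apply (D2h z) a) b = blinfun_apply (blinfun_apply (D2h z) b) a"
proof -
  obtain R where R: "R > 0" "ball z R \<subseteq> S"
    using S open_contains_ball by blast
  define \<Delta> where "\<Delta> u v t = h (z + t *\<^sub>R u + t *\<^sub>R v) - h (z + t *\<^sub>R u) - h (z + t *\<^sub>R v) + h z"
    for u v t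
  have "isCont D2h z"
    using cont S continuous_on_eq_continuous_at by blast
  have lim: "((\<lambda>t. \<Delta> u v t / t\<^sup>2) \<longlongrightarrow> blinfun_apply (blinfun_apply (D2h z) v) u) (at_right 0)" for u v
  proof -
    have c0: "((\<lambda>t. t * (norm u + norm v)) \<longlongrightarrow> 0) (at_right 0)"
      by (intro tendsto_mult_left_zero tendsto_ident_at)
    show ?thesis
    proof (rule tendsto_through_nearby_points[OF _ c0,
          where \<phi>="\<lambda>w. blinfun_apply (blinfun_apply (D2h w) v) u"])
      show "isCont (\<lambda>w. blinfun_apply (blinfun_apply (D2h w) v) u) z"
        using \<open>isCont D2h z\<close> by (intro continuous_intros)
      have "\<forall>\<^sub>F t in at_right 0. 0 < t \<and> t * (norm u + norm v) < R"
        using eventually_at_right_less order_tendstoD(2)[OF c0 R(1)] by (rule eventually_conj)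
      then show "\<forall>\<^sub>F t in at_right 0. \<exists>\<xi>. dist \<xi> z \<le> t * (norm u + norm v) \<and>
          \<Delta> u v t / t\<^sup>2 = blinfun_apply (blinfun_apply (D2h \<xi>) v) u"
      proof eventually_elim
        case (elim t)
        then obtain \<xi> where "dist \<xi> z \<le> t * (norm u + norm v)"
          "\<Delta> u v t = t\<^sup>2 * blinfun_apply (blinfun_apply (D2h \<xi>) v) u"
          using second_difference_mvt[of z R h Dh D2h t u v] R(2) d1 d2 unfolding \<Delta>_def by blast
        then show ?case
          using elim by auto
      qed
    qed
  qed
  have "\<Delta> b a = \<Delta> a b"
    by (simp add: fun_eq_iff \<Delta>_def add_ac)
  then show ?thesis
    using tendsto_unique[OF trivial_limit_at_right_real lim[of b a]] lim[of a b] by simp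
qed

lemma blinfun_apply_complex:
  fixes M :: "complex \<Rightarrow>\<^sub>L 'b::real_normed_vector"
  shows "blinfun_apply M v = Re v *\<^sub>R blinfun_apply M 1 + Im v *\<^sub>R blinfun_apply M \<i>"
proof -
  have "v = Re v *\<^sub>R 1 + Im v *\<^sub>R \<i>"
    by (simp add: complex_eq_iff)
  then show ?thesis
    by (metis blinfun.add_right blinfun.scaleR_right)
qed

text \<open>The Cauchy-Riemann equations for \<open>h\<^sub>x - \<i> h\<^sub>y\<close> are the Laplace equation together
  with the symmetry \<open>h\<^sub>x\<^sub>y = h\<^sub>y\<^sub>x\<close>.\<close>
lemma holomorphic_on_complex_gradient:
  fixes h :: "complex \<Rightarrow> real" and Dh :: "complex \<Rightarrow> (complex \<Rightarrow>\<^sub>L real)"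
    and D2h :: "complex \<Rightarrow> (complex \<Rightarrow>\<^sub>L (complex \<Rightarrow>\<^sub>L real))"
  assumes S: "open S"
    and d1: "\<And>z. z \<in> S \<Longrightarrow> (h has_derivative blinfun_apply (Dh z)) (at z)"
    and d2: "\<And>z. z \<in> S \<Longrightarrow> (Dh has_derivative blinfun_apply (D2h z)) (at z)"
    and cont: "continuous_on S D2h"
    and laplace: "\<And>z. z \<in> S \<Longrightarrow>
      blinfun_apply (blinfun_apply (D2h z) 1) 1 + blinfun_apply (blinfun_apply (D2h z) \<i>) \<i> = 0"
  shows "(\<lambda>z. of_real (blinfun_apply (Dh z) 1) - \<i> * of_real (blinfun_apply (Dh z) \<i>))
    holomorphic_on S"
proof -
  define L :: "(complex \<Rightarrow>\<^sub>L real) \<Rightarrow> complex" where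
    "L M = of_real (blinfun_apply M 1) - \<i> * of_real (blinfun_apply M \<i>)" for M
  have "bounded_linear L"
    unfolding L_def
    by (intro bounded_linear_sub bounded_linear_mult_right[THEN bounded_linear_compose]
        bounded_linear_compose[OF bounded_linear_of_real] blinfun.bounded_linear_left)
  have "((\<lambda>z. L (Dh z)) has_field_derivative L (blinfun_apply (D2h z) 1)) (at z)"
    if z: "z \<in> S" for z
  proof -
    have D2h_split: "blinfun_apply (blinfun_apply (D2h z) v) w =
        Re v * blinfun_apply (blinfun_apply (D2h z) 1) w +
        Im v * blinfun_apply (blinfun_apply (D2h z) \<i>) w"
      for v w
      by (simp add: blinfun_apply_complex[of "D2h z" v] blinfun.add_left blinfun.scaleR_left)
    have sym: "blinfun_apply (blinfun_apply (D2h z) \<i>) 1 =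
        blinfun_apply (blinfun_apply (D2h z) 1) \<i>"
      by (rule second_derivative_symmetric[OF S z d1 d2 cont])
    have lap: "blinfun_apply (blinfun_apply (D2h z) \<i>) \<i> =
        - blinfun_apply (blinfun_apply (D2h z) 1) 1"
      using laplace[OF z] by linarith
    have "L (blinfun_apply (D2h z) v) = L (blinfun_apply (D2h z) 1) * v" for v
      unfolding L_def D2h_split[of v 1] D2h_split[of v \<i>] sym lap
      by (simp add: complex_eq_iff algebra_simps)
    then have "(\<lambda>v. L (blinfun_apply (D2h z) v)) = (*) (L (blinfun_apply (D2h z) 1))"
      by (intro ext)
    moreover have "((\<lambda>z. L (Dh z)) has_derivative (\<lambda>v. L (blinfun_apply (D2h z) v))) (at z)"
      by (rule bounded_linear.has_derivative[OF \<open>bounded_linear L\<close> d2[OF z]])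
    ultimately show ?thesis
      by (simp only: has_field_derivative_def)
  qed
  then show ?thesis
    unfolding L_def
    by (meson field_differentiable_at_within field_differentiable_def holomorphic_on_def)
qed

lemma harmonic_on_convex_imp_Re_holomorphic:
  assumes "harmonic_on h S" "convex S"
  shows "\<exists>g. g holomorphic_on S \<and> (\<forall>z\<in>S. Re (g z) = h z)"
proof -
  obtain Dh :: "complex \<Rightarrow> (complex \<Rightarrow>\<^sub>L real)" and D2h
    where S: "open S"
      and d1: "\<And>z. z \<in> S \<Longrightarrow> (h has_derivative blinfun_apply (Dh z)) (at z)"
      and d2: "\<And>z. z \<in> S \<Longrightarrow> (Dh has_derivative blinfun_apply (D2h z)) (at z)"
      and cont: "continuous_on S D2h"
      and laplace: "\<And>z. z \<in> S \<Longrightarrow>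
        blinfun_apply (blinfun_apply (D2h z) 1) 1 + blinfun_apply (blinfun_apply (D2h z) \<i>) \<i> = 0"
    using assms(1) unfolding harmonic_on_def by blast
  define p where "p z = of_real (blinfun_apply (Dh z) 1) - \<i> * of_real (blinfun_apply (Dh z) \<i>)"
    for z
  have "p holomorphic_on S"
    unfolding p_def using S d1 d2 cont laplace by (rule holomorphic_on_complex_gradient)
  then obtain g where g: "\<And>z. z \<in> S \<Longrightarrow> (g has_field_derivative p z) (at z within S)"
    using holomorphic_convex_primitive'[OF assms(2) S] by blast
  have "((\<lambda>z. Re (g z) - h z) has_derivative (\<lambda>v. 0)) (at z within S)" if z: "z \<in> S" for z
  proof -
    have Re_p: "Re (p z * v) = blinfun_apply (Dh z) v" for v
      using blinfun_apply_complex[of "Dh z" v] by (simp add: p_def)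
    have "((\<lambda>z. Re (g z)) has_derivative (\<lambda>v. Re (p z * v))) (at z within S)"
      using bounded_linear.has_derivative[OF bounded_linear_Re
          g[OF z, unfolded has_field_derivative_def]]
      by simp
    from has_derivative_diff[OF this has_derivative_at_withinI[OF d1[OF z]]] show ?thesis
      by (simp only: Re_p diff_self)
  qed
  then have "\<exists>c. \<forall>z\<in>S. Re (g z) - h z = c"
    by (rule has_derivative_zero_constant[OF assms(2)])
  then obtain c where c: "\<And>z. z \<in> S \<Longrightarrow> Re (g z) - h z = c"
    by blast
  have "g holomorphic_on S"
    using g by (auto simp: holomorphic_on_def field_differentiable_def)
  then have "(\<lambda>z. g z - of_real c) holomorphic_on S"
    by (rule holomorphic_on_diff[OF _ holomorphic_on_const])
  moreover have "Re (g z - of_real c) = h z" if "z \<in> S" for z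
    by (simp add: c[OF that, symmetric])
  ultimately show ?thesis
    by blast
qed

lemma harmonic_on_convex_imp_norm_exp_holomorphic:
  assumes "harmonic_on h S" "convex S"
  obtains G where "G holomorphic_on S" "\<And>z. z \<in> S \<Longrightarrow> norm (G z) = exp (- h z)" "\<And>z. G z \<noteq> 0"
proof -
  obtain g where g: "g holomorphic_on S" "\<And>z. z \<in> S \<Longrightarrow> Re (g z) = h z"
    using harmonic_on_convex_imp_Re_holomorphic[OF assms] by blast
  show ?thesis
  proof (rule that[of "\<lambda>z. exp (- g z)"])
    show "(\<lambda>z. exp (- g z)) holomorphic_on S"
      using g(1) by (intro holomorphic_intros)
    show "norm (exp (- g z)) = exp (- h z)" if "z \<in> S" for z
      using g(2)[OF that] by (simp add: norm_exp_eq_Re)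
  qed simp
qed

section \<open>A Jordan domain bounded by the two curves\<close>

lemma path_extended_by_limit:
  fixes \<gamma> :: "real \<Rightarrow> 'a::t2_space"
  assumes cont: "continuous_on {0..<1} \<gamma>" and lim: "(\<gamma> \<longlongrightarrow> \<zeta>) (at_left 1)"
  defines "p \<equiv> \<lambda>t. if t < 1 then \<gamma> t else \<zeta>"
  shows "path p" "path_image p = \<gamma> ` {0..<1} \<union> {\<zeta>}" "pathstart p = \<gamma> 0" "pathfinish p = \<zeta>"
proof -
  show "path p"
    unfolding path_def continuous_on_eq_continuous_within
  proof
    fix x :: real assume x: "x \<in> {0..1}"
    show "continuous (at x within {0..1}) p"
    proof (cases "x < 1")
      case True
      have "(\<gamma> \<longlongrightarrow> \<gamma> x) (at x within {0..<1})"
        using cont x True by (simp add: continuous_on_def)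
      then have "(p \<longlongrightarrow> \<gamma> x) (at x within {0..<1})"
        by (rule Lim_transform_within_open[where s="{..<1}"]) (use True in \<open>auto simp: p_def\<close>)
      moreover have "at x within {0..1} = at x within {0..<1}"
        by (rule at_within_nhd[where S="{..<1}"]) (use True in auto)
      ultimately show ?thesis
        using True by (simp add: continuous_within p_def)
    next
      case False
      then have "x = 1"
        using x by auto
      have "\<forall>\<^sub>F t in at_left 1. \<gamma> t = p t"
        unfolding p_def by (simp add: eventually_at_filter)
      then have "(p \<longlongrightarrow> \<zeta>) (at_left 1)"
        using lim tendsto_cong by blast
      moreover have "at (1::real) within {0..1} = at_left 1"
        by (rule at_within_nhd[where S="{0<..}"]) auto
      ultimately show ?thesis
        using \<open>x = 1\<close> by (simp add: continuous_within p_def)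
    qed
  qed
  have "p ` {0..<1} = \<gamma> ` {0..<1}" "p 1 = \<zeta>"
    by (auto simp: p_def)
  moreover have "{0..1} = insert 1 {0..<(1::real)}"
    by auto
  ultimately show "path_image p = \<gamma> ` {0..<1} \<union> {\<zeta>}"
    unfolding path_image_def by (metis image_insert insert_is_Un sup_commute)
  show "pathstart p = \<gamma> 0" "pathfinish p = \<zeta>"
    by (auto simp: p_def pathstart_def pathfinish_def)
qed

lemma arc_joining_curve_ends:
  fixes \<gamma>1 \<gamma>2 :: "real \<Rightarrow> complex"
  assumes "continuous_on {0..<1} \<gamma>1" "(\<gamma>1 \<longlongrightarrow> \<zeta>1) (at_left 1)"
    and "continuous_on {0..<1} \<gamma>2" "(\<gamma>2 \<longlongrightarrow> \<zeta>2) (at_left 1)"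
    and "\<zeta>1 \<noteq> \<zeta>2"
  obtains \<beta> where "arc \<beta>" "pathstart \<beta> = \<zeta>1" "pathfinish \<beta> = \<zeta>2"
    "path_image \<beta> \<subseteq> \<gamma>1 ` {0..<1} \<union> \<gamma>2 ` {0..<1} \<union> closed_segment (\<gamma>1 0) (\<gamma>2 0) \<union> {\<zeta>1, \<zeta>2}"
proof -
  define p1 where "p1 = (\<lambda>t. if t < 1 then \<gamma>1 t else \<zeta>1)"
  define p2 where "p2 = (\<lambda>t. if t < 1 then \<gamma>2 t else \<zeta>2)"
  note p1 = path_extended_by_limit[OF assms(1,2), folded p1_def]
  note p2 = path_extended_by_limit[OF assms(3,4), folded p2_def]
  define q where "q = reversepath p1 +++ linepath (\<gamma>1 0) (\<gamma>2 0) +++ p2"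
  have "path q" "pathstart q = \<zeta>1" "pathfinish q = \<zeta>2"
    unfolding q_def using p1 p2 by simp_all
  then obtain \<beta> where "arc \<beta>" "path_image \<beta> \<subseteq> path_image q" "pathstart \<beta> = \<zeta>1" "pathfinish \<beta> = \<zeta>2"
    using path_contains_arc assms(5) by metis
  moreover have "path_image q =
      \<gamma>1 ` {0..<1} \<union> {\<zeta>1} \<union> (closed_segment (\<gamma>1 0) (\<gamma>2 0) \<union> (\<gamma>2 ` {0..<1} \<union> {\<zeta>2}))"
    unfolding q_def using p1 p2 by (simp add: path_image_join)
  ultimately show ?thesis
    using that by blast
qed

lemma cis_eq_imp_eq:
  assumes "cis x = cis y" "\<bar>x - y\<bar> < 2 * pi"
  shows "x = y"
proof -
  obtain n :: int where "\<i> * of_real x = \<i> * of_real y + of_int (2 * n) * pi * \<i>"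
    using assms(1) exp_eq by (metis cis_conv_exp)
  then have "x - y = 2 * pi * n"
    by (simp add: complex_eq_iff)
  with assms(2) have "\<bar>n\<bar> < 1"
    by (simp add: abs_mult)
  with \<open>x - y = 2 * pi * n\<close> show ?thesis
    by simp
qed

lemma arc_on_unit_circle:
  fixes \<zeta>1 \<zeta>2 :: complex
  assumes "\<zeta>1 \<in> sphere 0 1" "\<zeta>2 \<in> sphere 0 1" "\<zeta>1 \<noteq> \<zeta>2"
  obtains \<alpha> \<zeta>0 where "arc \<alpha>" "path_image \<alpha> \<subseteq> sphere 0 1" "pathstart \<alpha> = \<zeta>1" "pathfinish \<alpha> = \<zeta>2"
    "\<zeta>0 \<in> path_image \<alpha>" "\<zeta>0 \<noteq> \<zeta>1" "\<zeta>0 \<noteq> \<zeta>2" "- \<zeta>0 \<notin> path_image \<alpha>"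
proof -
  define a where "a = Arg2pi \<zeta>1"
  define \<theta> where "\<theta> = Arg2pi (\<zeta>2 / \<zeta>1)"
  have \<zeta>1_eq: "\<zeta>1 = cis a"
    using assms(1) complex_norm_eq_1_exp by (simp add: a_def cis_conv_exp)
  have "norm (\<zeta>2 / \<zeta>1) = 1"
    using assms(1,2) by (simp add: norm_divide)
  then have "\<zeta>2 / \<zeta>1 = cis \<theta>"
    unfolding complex_norm_eq_1_exp by (simp add: \<theta>_def cis_conv_exp)
  then have \<zeta>2_eq: "\<zeta>2 = cis (a + \<theta>)"
    using assms(1) by (auto simp: \<zeta>1_eq cis_mult field_simps)
  have "\<theta> \<noteq> 0"
    using assms(3) \<zeta>1_eq \<zeta>2_eq by auto
  then have \<theta>: "0 < \<theta>" "\<theta> < 2 * pi"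
    using Arg2pi[of "\<zeta>2 / \<zeta>1"] by (auto simp: \<theta>_def)
  define \<alpha> where "\<alpha> = part_circlepath 0 1 a (a + \<theta>)"
  have image: "path_image \<alpha> = cis ` {a..a + \<theta>}"
    using \<theta> by (simp add: \<alpha>_def path_image_part_circlepath' closed_segment_eq_real_ivl)
  define \<zeta>0 where "\<zeta>0 = cis (a + \<theta> / 2)"
  show ?thesis
  proof
    show "arc \<alpha>"
      using \<theta> by (simp add: \<alpha>_def arc_part_circlepath)
    show "path_image \<alpha> \<subseteq> sphere 0 1"
      using \<theta> by (simp add: \<alpha>_def path_image_part_circlepath_subset)
    show "pathstart \<alpha> = \<zeta>1" "pathfinish \<alpha> = \<zeta>2"
      by (simp_all add: \<alpha>_def \<zeta>1_eq \<zeta>2_eq cis_conv_exp)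
    show "\<zeta>0 \<in> path_image \<alpha>"
      using \<theta> by (simp add: image \<zeta>0_def)
    show "\<zeta>0 \<noteq> \<zeta>1" "\<zeta>0 \<noteq> \<zeta>2"
      using \<theta> cis_eq_imp_eq[of "a + \<theta> / 2" a] cis_eq_imp_eq[of "a + \<theta> / 2" "a + \<theta>"]
      by (auto simp: \<zeta>0_def \<zeta>1_eq \<zeta>2_eq)
    show "- \<zeta>0 \<notin> path_image \<alpha>"
    proof
      assume "- \<zeta>0 \<in> path_image \<alpha>"
      then obtain x where x: "a \<le> x" "x \<le> a + \<theta>" "cis x = cis (a + \<theta> / 2 + pi)"
        by (auto simp: image \<zeta>0_def minus_cis)
      then have "x = a + \<theta> / 2 + pi"
        using \<theta> by (intro cis_eq_imp_eq) auto
      with x \<theta> show False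
        by linarith
    qed
  qed
qed

lemma inside_subset_ball:
  fixes S :: "'a::euclidean_space set"
  assumes "closed S" "S \<subseteq> cball a r"
  shows "inside S \<subseteq> ball a r"
proof -
  have "inside S \<subseteq> cball a r"
    using outside_subset_convex[OF convex_cball assms(2)] inside_Int_outside by blast
  from interior_maximal[OF this open_inside[OF assms(1)]] show ?thesis
    by simp
qed

lemma connected_subset_inside:
  assumes "connected T" "T \<inter> S = {}" "T \<inter> inside S \<noteq> {}"
  shows "T \<subseteq> inside S"
  using inside_outside_intersect_connected[of T S] assms union_with_outside by blast

lemma ball_Int_convex_subset_inside:
  fixes S U :: "'a::euclidean_space set"
  assumes "x \<in> closure (inside S)" "d > 0" "convex U" "inside S \<subseteq> U" "ball x d \<inter> U \<inter> S = {}"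
  shows "ball x d \<inter> U \<subseteq> inside S"
proof (rule connected_subset_inside)
  show "connected (ball x d \<inter> U)"
    using assms(3) by (intro convex_connected convex_Int convex_ball)
  show "ball x d \<inter> U \<inter> S = {}"
    by (fact assms(5))
  obtain y where "y \<in> inside S" "dist y x < d"
    using assms(1,2) closure_approachable by blast
  then show "ball x d \<inter> U \<inter> inside S \<noteq> {}"
    using assms(4) by (auto simp: dist_commute)
qed

lemma sphere_point_off_closure_inside:
  fixes S :: "'a::euclidean_space set"
  assumes "closed S" "S \<subseteq> cball 0 1" "\<eta> \<in> sphere 0 1" "\<eta> \<notin> S"
  obtains d where "d > 0" "ball \<eta> d \<inter> closure (inside S) = {}"
proof -
  obtain d where d: "d > 0" "ball \<eta> d \<inter> S = {}"
    using assms(1,4) open_contains_ball[of "- S"] by (force simp: open_Compl)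
  define p where "p = (1 + d / 2) *\<^sub>R \<eta>"
  have "p \<in> ball \<eta> d"
    using assms(3) d(1) by (simp add: p_def dist_norm algebra_simps)
  moreover have "p \<in> outside S"
    using outside_subset_convex[OF convex_cball assms(2)] assms(3) d(1) by (auto simp: p_def)
  ultimately have "ball \<eta> d \<inter> inside S = {}"
    using inside_outside_intersect_connected[of "ball \<eta> d" S] d(2) by blast
  then show ?thesis
    using that d(1) open_Int_closure_eq_empty[OF open_ball] by blast
qed

text \<open>\<open>\<Omega>\<close> is the inside of the Jordan curve formed by an arc of the unit circle from
  \<open>\<zeta>1\<close> to \<open>\<zeta>2\<close> and an arc running through \<open>\<gamma>1\<close>, the segment and \<open>\<gamma>2\<close>; the point
  \<open>\<eta>\<close> is the antipode of an interior point \<open>\<zeta>0\<close> of the circular arc.\<close>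
lemma region_between_curves:
  fixes \<gamma>1 \<gamma>2 :: "real \<Rightarrow> complex"
  assumes \<gamma>1: "continuous_on {0..<1} \<gamma>1" "\<gamma>1 ` {0..<1} \<subseteq> ball 0 1" "(\<gamma>1 \<longlongrightarrow> \<zeta>1) (at_left 1)"
    and \<gamma>2: "continuous_on {0..<1} \<gamma>2" "\<gamma>2 ` {0..<1} \<subseteq> ball 0 1" "(\<gamma>2 \<longlongrightarrow> \<zeta>2) (at_left 1)"
    and \<zeta>: "\<zeta>1 \<in> sphere 0 1" "\<zeta>2 \<in> sphere 0 1" "\<zeta>1 \<noteq> \<zeta>2"
  obtains \<Omega> \<eta> d \<zeta>0 d0 where "open \<Omega>" "\<Omega> \<subseteq> ball 0 1"
    "frontier \<Omega> \<inter> ball 0 1 \<subseteq> \<gamma>1 ` {0..<1} \<union> \<gamma>2 ` {0..<1} \<union> closed_segment (\<gamma>1 0) (\<gamma>2 0)"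
    "\<eta> \<in> sphere 0 1" "d > 0" "ball \<eta> d \<inter> closure \<Omega> = {}"
    "\<zeta>0 \<in> sphere 0 1" "d0 > 0" "d0 \<le> 1" "ball \<zeta>0 d0 \<inter> ball 0 1 \<subseteq> \<Omega>"
proof -
  define E where "E = \<gamma>1 ` {0..<1} \<union> \<gamma>2 ` {0..<1} \<union> closed_segment (\<gamma>1 0) (\<gamma>2 0)"
  have "\<gamma>1 0 \<in> ball 0 1" "\<gamma>2 0 \<in> ball 0 1"
    using \<gamma>1(2) \<gamma>2(2) by (auto simp: image_subset_iff)
  then have E: "E \<subseteq> ball 0 1"
    unfolding E_def using \<gamma>1(2) \<gamma>2(2) closed_segment_subset[OF _ _ convex_ball] by blast
  obtain \<beta> where \<beta>: "arc \<beta>" "pathstart \<beta> = \<zeta>1" "pathfinish \<beta> = \<zeta>2" "path_image \<beta> \<subseteq> E \<union> {\<zeta>1, \<zeta>2}"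
    using arc_joining_curve_ends[OF \<gamma>1(1,3) \<gamma>2(1,3) \<zeta>(3)] unfolding E_def by blast
  obtain \<alpha> \<zeta>0 where \<alpha>: "arc \<alpha>" "path_image \<alpha> \<subseteq> sphere 0 1" "pathstart \<alpha> = \<zeta>1" "pathfinish \<alpha> = \<zeta>2"
      "\<zeta>0 \<in> path_image \<alpha>" "\<zeta>0 \<noteq> \<zeta>1" "\<zeta>0 \<noteq> \<zeta>2" "- \<zeta>0 \<notin> path_image \<alpha>"
    using arc_on_unit_circle[OF \<zeta>] by blast
  have \<alpha>_sphere: "x \<in> path_image \<alpha> \<Longrightarrow> x \<notin> E" for x
    using \<alpha>(2) E by fastforce
  define S where "S = path_image \<alpha> \<union> path_image \<beta>"
  have "simple_path (\<alpha> +++ reversepath \<beta>)"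
  proof (rule simple_path_join_loop)
    show "path_image \<alpha> \<inter> path_image (reversepath \<beta>) \<subseteq> {pathstart \<alpha>, pathstart (reversepath \<beta>)}"
      using \<alpha>(3) \<beta>(3,4) \<alpha>_sphere by auto
  qed (simp_all add: \<alpha>(1,3,4) \<beta>(1,2,3) arc_reversepath)
  moreover have "pathfinish (\<alpha> +++ reversepath \<beta>) = pathstart (\<alpha> +++ reversepath \<beta>)"
    by (simp add: \<alpha>(3) \<beta>(2))
  moreover have "path_image (\<alpha> +++ reversepath \<beta>) = S"
    using \<alpha>(4) \<beta>(3) by (simp add: S_def path_image_join)
  ultimately have "open (inside S)" "frontier (inside S) = S"
    using Jordan_inside_outside[of "\<alpha> +++ reversepath \<beta>"] by simp_all
  have "closed S"
    unfolding S_def using \<alpha>(1) \<beta>(1) by (intro closed_Un closed_path_image arc_imp_path)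
  have "S \<subseteq> cball 0 1"
    unfolding S_def using \<alpha>(2) \<beta>(4) E \<zeta>(1,2) ball_subset_cball sphere_cball by blast
  have \<zeta>12: "\<zeta>1 \<in> path_image \<alpha>" "\<zeta>2 \<in> path_image \<alpha>"
    using \<alpha>(3,4) by auto
  have "- \<zeta>0 \<in> sphere 0 1"
    using \<alpha>(2,5) by auto
  moreover have "- \<zeta>0 \<notin> E"
    using calculation E by fastforce
  ultimately have "- \<zeta>0 \<notin> S"
    using \<alpha>(8) \<beta>(4) \<zeta>12 by (auto simp: S_def)
  then obtain d where d: "d > 0" "ball (- \<zeta>0) d \<inter> closure (inside S) = {}"
    using sphere_point_off_closure_inside[OF \<open>closed S\<close> \<open>S \<subseteq> cball 0 1\<close>]
      \<open>- \<zeta>0 \<in> sphere 0 1\<close> by blast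
  have "\<zeta>0 \<notin> path_image \<beta>"
    using \<alpha> \<beta>(4) \<alpha>_sphere by auto
  then obtain d0 where d0: "d0 > 0" "ball \<zeta>0 d0 \<inter> path_image \<beta> = {}"
    using \<beta>(1) open_contains_ball[of "- path_image \<beta>"]
    by (force simp: open_Compl closed_path_image arc_imp_path)
  have "inside S \<subseteq> ball 0 1"
    by (rule inside_subset_ball[OF \<open>closed S\<close> \<open>S \<subseteq> cball 0 1\<close>])
  have "\<zeta>0 \<in> frontier (inside S)"
    using \<alpha>(5) \<open>frontier (inside S) = S\<close> by (simp add: S_def)
  then have "ball \<zeta>0 (min d0 1) \<inter> ball 0 1 \<subseteq> inside S"
    using \<open>inside S \<subseteq> ball 0 1\<close> d0 \<alpha>(2)
    by (intro ball_Int_convex_subset_inside) (auto simp: frontier_def S_def)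
  show ?thesis
  proof (rule that[of "inside S" "- \<zeta>0" d \<zeta>0 "min d0 1"])
    show "open (inside S)"
      by fact
    show "inside S \<subseteq> ball 0 1"
      by fact
    show "frontier (inside S) \<inter> ball 0 1 \<subseteq>
        \<gamma>1 ` {0..<1} \<union> \<gamma>2 ` {0..<1} \<union> closed_segment (\<gamma>1 0) (\<gamma>2 0)"
      using \<open>frontier (inside S) = S\<close> \<alpha>(2) \<beta>(4) \<zeta> by (auto simp: S_def E_def)
    show "- \<zeta>0 \<in> sphere 0 1" "d > 0" "ball (- \<zeta>0) d \<inter> closure (inside S) = {}"
      by fact+
    show "\<zeta>0 \<in> sphere 0 1"
      using \<alpha>(2,5) by blast
    show "min d0 1 > 0" "min d0 1 \<le> (1::real)"
      using d0(1) by auto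
    show "ball \<zeta>0 (min d0 1) \<inter> ball 0 1 \<subseteq> inside S"
      by fact
  qed
qed

section \<open>Bounded holomorphic functions that are small on arcs\<close>

lemma rotation_by_root_of_unity_near:
  fixes N :: nat and \<zeta> \<zeta>0 :: complex
  assumes "N > 0" "norm \<zeta> = 1" "norm \<zeta>0 = 1"
  shows "\<exists>k<N. dist (cis (- 2 * pi * k / N) * \<zeta>) \<zeta>0 \<le> 2 * pi / N"
proof -
  define \<theta> where "\<theta> = Arg2pi (\<zeta> / \<zeta>0)"
  have "norm (\<zeta> / \<zeta>0) = 1"
    using assms by (simp add: norm_divide)
  then have "cis \<theta> = \<zeta> / \<zeta>0"
    unfolding complex_norm_eq_1_exp by (simp add: \<theta>_def cis_conv_exp)
  then have \<zeta>_eq: "\<zeta> = \<zeta>0 * cis \<theta>"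
    using assms(3) by auto
  have \<theta>: "0 \<le> \<theta>" "\<theta> < 2 * pi"
    using Arg2pi by (auto simp: \<theta>_def)
  define y where "y = \<theta> * N / (2 * pi)"
  define k where "k = nat \<lfloor>y\<rfloor>"
  have "0 \<le> y" "y < N"
    using \<theta> assms(1) by (simp_all add: y_def divide_less_eq)
  then have "real k = \<lfloor>y\<rfloor>" "k < N"
    by (simp_all add: k_def nat_less_iff floor_less_iff)
  then have k: "real k \<le> y" "y < real k + 1"
    by linarith+
  define x where "x = 2 * pi * (y - k) / N"
  have x: "0 \<le> x" "x \<le> 2 * pi / N"
    using k by (simp_all add: x_def divide_right_mono)
  have "\<theta> = 2 * pi * k / N + x"
    using assms(1) by (simp add: x_def y_def field_simps)
  then have "cis (- 2 * pi * k / N) * \<zeta> = \<zeta>0 * cis x"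
    by (simp add: \<zeta>_eq cis_mult mult.left_commute)
  moreover have "\<zeta>0 * cis x - \<zeta>0 = \<zeta>0 * (cis x - 1)"
    by (simp add: algebra_simps)
  ultimately have "dist (cis (- 2 * pi * k / N) * \<zeta>) \<zeta>0 = norm (cis x - 1)"
    using assms(3) by (simp add: dist_norm norm_mult)
  also have "\<dots> = 2 * \<bar>sin (x / 2)\<bar>"
    using dist_exp_i_1[of x] by (simp add: cis_conv_exp)
  also have "\<dots> \<le> 2 * pi / N"
    using abs_sin_x_le_abs_x[of "x / 2"] x by simp
  finally show ?thesis
    using \<open>k < N\<close> by blast
qed

lemma prod_le_one_factor_le:
  fixes a :: "'i \<Rightarrow> real"
  assumes "finite I" "k \<in> I" "\<And>i. i \<in> I \<Longrightarrow> 0 \<le> a i" "\<And>i. i \<in> I \<Longrightarrow> a i \<le> 1" "a k \<le> \<epsilon>"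
  shows "(\<Prod>i\<in>I. a i) \<le> \<epsilon>"
proof -
  have "(\<Prod>i\<in>I. a i) = a k * (\<Prod>i\<in>I - {k}. a i)"
    using assms(1,2) by (rule prod.remove)
  also have "\<dots> \<le> a k * 1"
    using assms(2-4) by (intro mult_left_mono prod_le_1) auto
  finally show ?thesis
    using assms(5) by simp
qed

lemma prod_rotations_le_on_circle:
  fixes G :: "complex \<Rightarrow> complex" and N :: nat
  assumes G1: "\<And>z. z \<in> ball 0 1 \<Longrightarrow> norm (G z) \<le> 1"
    and N: "N > 0" "2 * pi / N \<le> \<delta>" and \<zeta>0: "norm \<zeta>0 = 1" and s: "0 < s" "s < 1"
    and Gs: "\<And>\<zeta>. \<zeta> \<in> sphere 0 1 \<inter> cball \<zeta>0 \<delta> \<Longrightarrow> norm (G (of_real s * \<zeta>)) \<le> \<epsilon>"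
    and z: "norm z = s"
  shows "norm (\<Prod>j<N. G (cis (- 2 * pi * j / N) * z)) \<le> \<epsilon>"
proof -
  define \<zeta> where "\<zeta> = z / of_real s"
  have "norm \<zeta> = 1" "z = of_real s * \<zeta>"
    using z s by (auto simp: \<zeta>_def norm_divide)
  from rotation_by_root_of_unity_near[OF N(1) this(1) \<zeta>0]
  obtain k where "k < N" "dist (cis (- 2 * pi * k / N) * \<zeta>) \<zeta>0 \<le> 2 * pi / N"
    by blast
  then have "cis (- 2 * pi * k / N) * \<zeta> \<in> sphere 0 1 \<inter> cball \<zeta>0 \<delta>"
    using N(2) \<open>norm \<zeta> = 1\<close> by (simp add: norm_mult dist_commute)
  moreover have "of_real s * (cis (- 2 * pi * k / N) * \<zeta>) = cis (- 2 * pi * k / N) * z"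
    using \<open>z = of_real s * \<zeta>\<close> by (simp add: mult.left_commute)
  ultimately have "norm (G (cis (- 2 * pi * k / N) * z)) \<le> \<epsilon>"
    using Gs by metis
  moreover have "cis (- 2 * pi * j / N) * z \<in> ball 0 1" for j :: nat
    using z s by (simp add: norm_mult)
  ultimately have "(\<Prod>j<N. norm (G (cis (- 2 * pi * j / N) * z))) \<le> \<epsilon>"
    using \<open>k < N\<close> G1 by (intro prod_le_one_factor_le[of _ k]) auto
  then show ?thesis
    by (simp add: prod_norm)
qed

lemma vanishes_at_0_if_small_on_arcs:
  assumes holG: "G holomorphic_on ball 0 1" and G1: "\<And>z. z \<in> ball 0 1 \<Longrightarrow> norm (G z) \<le> 1"
    and \<zeta>0: "\<zeta>0 \<in> sphere 0 1" and \<delta>: "\<delta> > 0"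
    and small: "\<And>\<epsilon>. \<epsilon> > 0 \<Longrightarrow> \<exists>s. 0 < s \<and> s < 1 \<and>
        (\<forall>\<zeta>\<in>sphere 0 1 \<inter> cball \<zeta>0 \<delta>. norm (G (of_real s * \<zeta>)) \<le> \<epsilon>)"
  shows "G 0 = 0"
proof (rule ccontr)
  assume "G 0 \<noteq> 0"
  obtain N :: nat where "N > 0" "inverse (real N) < \<delta> / (2 * pi)"
    using ex_inverse_of_nat_less \<delta>
    by (metis divide_pos_pos pi_gt_zero zero_less_mult_iff zero_less_numeral)
  then have N: "N > 0" "2 * pi / N \<le> \<delta>"
    by (simp_all add: field_simps)
  define H where "H z = (\<Prod>j<N. G (cis (- 2 * pi * j / N) * z))" for z
  have "(\<lambda>z. G (cis (- 2 * pi * j / N) * z)) holomorphic_on ball 0 1" for j :: nat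
  proof -
    have "(\<lambda>z. cis (- 2 * pi * j / N) * z) ` ball 0 1 \<subseteq> ball 0 1"
      by (auto simp: norm_mult)
    with holomorphic_on_compose_gen[OF _ holG] show ?thesis
      by (simp add: o_def holomorphic_on_mult holomorphic_on_const holomorphic_on_id)
  qed
  then have "H holomorphic_on ball 0 1"
    unfolding H_def by (rule holomorphic_on_prod)
  define \<epsilon> where "\<epsilon> = norm (G 0) ^ N / 2"
  have "\<epsilon> > 0"
    using \<open>G 0 \<noteq> 0\<close> by (simp add: \<epsilon>_def)
  then obtain s where s: "0 < s" "s < 1"
    and Gs: "\<And>\<zeta>. \<zeta> \<in> sphere 0 1 \<inter> cball \<zeta>0 \<delta> \<Longrightarrow> norm (G (of_real s * \<zeta>)) \<le> \<epsilon>"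
    using small by blast
  have frontier_bound: "norm (H z) \<le> \<epsilon>" if "z \<in> frontier (ball 0 s)" for z
    unfolding H_def using that s \<zeta>0
    by (intro prod_rotations_le_on_circle[where G=G, OF G1 N _ s Gs]) auto
  have "cball 0 s \<subseteq> ball (0::complex) 1"
    using s by auto
  then have "H holomorphic_on cball 0 s"
    by (rule holomorphic_on_subset[OF \<open>H holomorphic_on ball 0 1\<close>])
  then have "H holomorphic_on interior (ball 0 s)" "continuous_on (closure (ball 0 s)) H"
    using holomorphic_on_subset[OF _ ball_subset_cball] holomorphic_on_imp_continuous_on s
    by simp_all
  moreover have "0 \<in> ball (0::complex) s"
    using s by simp
  ultimately have "norm (H 0) \<le> \<epsilon>"
    using maximum_modulus_frontier[where f=H and S="ball 0 s", OF _ _ bounded_ball frontier_bound]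
    by blast
  moreover have "H 0 = G 0 ^ N"
    by (simp add: H_def)
  ultimately show False
    using \<open>G 0 \<noteq> 0\<close> by (simp add: \<epsilon>_def norm_power)
qed

section \<open>Boundary behaviour of functions in \<open>U_A\<close>\<close>

lemma dist_scaled_unit:
  fixes \<zeta> :: complex
  assumes "norm \<zeta> = 1" "s \<le> 1"
  shows "dist \<zeta> (of_real s * \<zeta>) = 1 - s"
proof -
  have "\<zeta> - of_real s * \<zeta> = of_real (1 - s) * \<zeta>"
    by (simp add: algebra_simps)
  then show ?thesis
    using assms by (simp only: dist_norm norm_mult norm_of_real) simp
qed

lemma bounded_on_Un_compact:
  fixes F :: "'a::topological_space \<Rightarrow> 'b::real_normed_vector"
  assumes "continuous_on C F" "compact C" "\<And>z. z \<in> A \<Longrightarrow> norm (F z) \<le> 1"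
  obtains M where "1 \<le> M" "\<And>z. z \<in> A \<union> C \<Longrightarrow> norm (F z) \<le> M"
proof -
  obtain B where "\<forall>y \<in> F ` C. norm y \<le> B"
    using compact_imp_bounded[OF compact_continuous_image[OF assms(1,2)]] bounded_iff by blast
  then show ?thesis
    using that[of "max 1 B"] assms(3) by force
qed

lemma U_A_approximates_constant:
  assumes "f \<in> U_A r" "r \<longlonglongrightarrow> 1"
    and "compact K" "K \<subseteq> sphere 0 1" "K \<noteq> sphere 0 1" "\<rho> < 1" "e > 0"
  obtains n where "\<rho> < r n" "\<And>\<zeta>. \<zeta> \<in> K \<Longrightarrow> norm (f (of_real (r n) * \<zeta>) - c) < e"
proof -
  have "continuous_on K (\<lambda>_. c)"
    by simp
  then obtain m where "strict_mono m"
    and approx: "\<forall>\<epsilon>>0. \<forall>\<^sub>F k in sequentially. \<forall>\<zeta>\<in>K. norm (f (of_real (r (m k)) * \<zeta>) - c) < \<epsilon>"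
    using assms(1,3-5) unfolding U_A_def by blast
  have "(\<lambda>k. r (m k)) \<longlonglongrightarrow> 1"
    using LIMSEQ_subseq_LIMSEQ[OF assms(2) \<open>strict_mono m\<close>] by (simp add: o_def)
  then have "\<forall>\<^sub>F k in sequentially. \<rho> < r (m k)"
    using assms(6) by (rule order_tendstoD)
  moreover have "\<forall>\<^sub>F k in sequentially. \<forall>\<zeta>\<in>K. norm (f (of_real (r (m k)) * \<zeta>) - c) < e"
    using approx assms(7) by blast
  ultimately have "\<forall>\<^sub>F k in sequentially.
      \<rho> < r (m k) \<and> (\<forall>\<zeta>\<in>K. norm (f (of_real (r (m k)) * \<zeta>) - c) < e)"
    by (rule eventually_conj)
  then obtain k where "\<rho> < r (m k)" "\<forall>\<zeta>\<in>K. norm (f (of_real (r (m k)) * \<zeta>) - c) < e"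
    unfolding eventually_sequentially by blast
  then show ?thesis
    using that by blast
qed

lemma maximum_modulus_Int_ball:
  fixes F :: "complex \<Rightarrow> complex"
  assumes F: "F holomorphic_on U" "cball a s \<subseteq> U" and "open \<Omega>"
    and inner: "\<And>z. z \<in> frontier \<Omega> \<inter> ball a s \<Longrightarrow> norm (F z) \<le> M"
    and circle: "\<And>z. z \<in> closure \<Omega> \<inter> sphere a s \<Longrightarrow> norm (F z) \<le> M"
    and w: "w \<in> \<Omega> \<inter> ball a s"
  shows "norm (F w) \<le> M"
proof -
  define W where "W = \<Omega> \<inter> ball a s"
  have "s > 0"
    using w by (auto intro: le_less_trans[OF zero_le_dist])
  have cl: "closure W \<subseteq> closure \<Omega> \<inter> cball a s"
    using closure_mono[of W \<Omega>] closure_mono[of W "ball a s"] \<open>s > 0\<close> by (auto simp: W_def)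
  then have "F holomorphic_on closure W"
    using holomorphic_on_subset[OF F(1)] F(2) by blast
  show ?thesis
  proof (rule maximum_modulus_frontier[where f=F and S=W])
    show "F holomorphic_on interior W"
      using \<open>F holomorphic_on closure W\<close> interior_subset closure_subset
      by (metis holomorphic_on_subset order_trans)
    show "continuous_on (closure W) F"
      using \<open>F holomorphic_on closure W\<close> by (rule holomorphic_on_imp_continuous_on)
    show "bounded W" "w \<in> W"
      using w by (simp_all add: W_def bounded_Int)
  next
    fix z assume "z \<in> frontier W"
    then have "z \<in> closure \<Omega> \<inter> cball a s" "z \<in> frontier \<Omega> \<or> z \<in> sphere a s"
      using cl frontier_Int[of \<Omega> "ball a s"] \<open>s > 0\<close> by (auto simp: W_def)
    then show "norm (F z) \<le> M"
      using inner circle by force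
  qed
qed

lemma U_A_mult_bounded_on_region:
  fixes f G :: "complex \<Rightarrow> complex"
  assumes f: "f \<in> U_A r" and r: "\<And>n. r n < 1" "r \<longlonglongrightarrow> 1"
    and G: "G holomorphic_on ball 0 1" "\<And>z. z \<in> ball 0 1 \<Longrightarrow> norm (G z) \<le> 1"
    and \<Omega>: "open \<Omega>" "\<Omega> \<subseteq> ball 0 1"
    and \<eta>: "\<eta> \<in> sphere 0 1" "d > 0" "ball \<eta> d \<inter> closure \<Omega> = {}"
    and M: "1 \<le> M" "\<And>z. z \<in> frontier \<Omega> \<inter> ball 0 1 \<Longrightarrow> norm (f z * G z) \<le> M"
    and w: "w \<in> \<Omega>"
  shows "norm (f w * G w) \<le> M"
proof -
  define K where "K = sphere 0 1 - ball \<eta> (d / 2)"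
  have "K \<noteq> sphere 0 1"
    unfolding K_def using \<eta>(1,2) by (metis DiffD2 centre_in_ball half_gt_zero)
  then have K: "compact K" "K \<subseteq> sphere 0 1" "K \<noteq> sphere 0 1"
    by (auto simp: K_def compact_diff)
  have "max (norm w) (1 - d / 2) < 1"
    using w \<Omega>(2) \<eta>(2) by auto
  then obtain n where n: "max (norm w) (1 - d / 2) < r n"
    and f_small: "\<And>\<zeta>. \<zeta> \<in> K \<Longrightarrow> norm (f (of_real (r n) * \<zeta>) - 0) < 1"
    using U_A_approximates_constant[where c=0, OF f r(2) K _ zero_less_one] by blast
  define s where "s = r n"
  have s: "norm w < s" "1 - d / 2 < s" "s < 1"
    using n r(1) by (auto simp: s_def)
  show ?thesis
  proof (rule maximum_modulus_Int_ball[where F="\<lambda>z. f z * G z" and U="ball 0 1" and a=0 and s=s,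
        OF _ _ \<Omega>(1)])
    show "(\<lambda>z. f z * G z) holomorphic_on ball 0 1"
      using f G(1) by (auto simp: U_A_def intro!: holomorphic_intros)
    show "cball 0 s \<subseteq> ball (0::complex) 1" "w \<in> \<Omega> \<inter> ball 0 s"
      using s w by auto
    show "norm (f z * G z) \<le> M" if "z \<in> frontier \<Omega> \<inter> ball 0 s" for z
      using M(2) that s(3) by auto
  next
    fix z assume z: "z \<in> closure \<Omega> \<inter> sphere 0 s"
    define \<zeta> where "\<zeta> = z / of_real s"
    have "s > 0"
      using s(1) norm_ge_zero[of w] by linarith
    with z have \<zeta>: "norm \<zeta> = 1" "z = of_real s * \<zeta>"
      by (simp_all add: \<zeta>_def norm_divide)
    have "\<zeta> \<in> K"
    proof (rule ccontr)
      assume "\<zeta> \<notin> K"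
      then have "dist \<eta> \<zeta> < d / 2"
        using \<zeta>(1) by (simp add: K_def)
      moreover have "dist \<zeta> z = 1 - s"
        using \<zeta> s(3) dist_scaled_unit by simp
      ultimately have "z \<in> ball \<eta> d"
        using s(2) dist_triangle[of \<eta> z \<zeta>] by simp
      then show False
        using \<eta>(3) z by blast
    qed
    then have "norm (f z) \<le> 1"
      using f_small \<zeta>(2) by (fastforce simp: s_def)
    moreover have "norm (G z) \<le> 1"
      using G(2) z s(3) by simp
    ultimately show "norm (f z * G z) \<le> M"
      using M(1) mult_le_one[of "norm (f z)" "norm (G z)"] by (simp add: norm_mult)
  qed
qed

lemma U_A_mult_bounded_imp_small_on_arc:
  fixes f G :: "complex \<Rightarrow> complex"
  assumes f: "f \<in> U_A r" and r: "\<And>n. r n < 1" "r \<longlonglongrightarrow> 1"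
    and \<zeta>0: "\<zeta>0 \<in> sphere 0 1" "0 < d0" "d0 \<le> 1"
    and M: "0 \<le> M" "\<And>z. z \<in> ball \<zeta>0 d0 \<inter> ball 0 1 \<Longrightarrow> norm (f z * G z) \<le> M"
    and \<epsilon>: "\<epsilon> > 0"
  obtains s where "0 < s" "s < 1"
    "\<And>\<zeta>. \<zeta> \<in> sphere 0 1 \<inter> cball \<zeta>0 (d0 / 2) \<Longrightarrow> norm (G (of_real s * \<zeta>)) \<le> \<epsilon>"
proof -
  define K where "K = sphere 0 1 \<inter> cball \<zeta>0 (d0 / 2)"
  have "- \<zeta>0 \<in> sphere 0 1 - K"
    using \<zeta>0 by (auto simp: K_def dist_norm)
  then have K: "compact K" "K \<subseteq> sphere 0 1" "K \<noteq> sphere 0 1"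
    by (auto simp: K_def compact_Int_closed)
  \<comment> \<open>Where \<open>f \<approx> C\<close>, the bound \<open>|f G| \<le> M\<close> forces \<open>|G| \<le> M / |f| < \<epsilon>\<close>.\<close>
  define C where "C = M / \<epsilon> + 1"
  have "1 - d0 / 2 < 1"
    using \<zeta>0(2) by simp
  then obtain n where n: "1 - d0 / 2 < r n"
    and f_large: "\<And>\<zeta>. \<zeta> \<in> K \<Longrightarrow> norm (f (of_real (r n) * \<zeta>) - of_real C) < 1"
    using U_A_approximates_constant[where c="of_real C", OF f r(2) K _ zero_less_one] by blast
  define s where "s = r n"
  have s: "1 - d0 / 2 < s" "s < 1" "0 < s"
    using n r(1) \<zeta>0(3) by (auto simp: s_def)
  show ?thesis
  proof (rule that[OF s(3) s(2)])
    fix \<zeta> assume "\<zeta> \<in> sphere 0 1 \<inter> cball \<zeta>0 (d0 / 2)"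
    then have "\<zeta> \<in> K" "norm \<zeta> = 1" "dist \<zeta>0 \<zeta> \<le> d0 / 2"
      by (auto simp: K_def)
    define z where "z = of_real s * \<zeta>"
    have "dist \<zeta> z = 1 - s"
      using \<open>norm \<zeta> = 1\<close> s(2) dist_scaled_unit by (simp add: z_def)
    then have "z \<in> ball \<zeta>0 d0 \<inter> ball 0 1"
      using \<open>norm \<zeta> = 1\<close> \<open>dist \<zeta>0 \<zeta> \<le> d0 / 2\<close> s dist_triangle[of \<zeta>0 z \<zeta>]
      by (simp add: z_def norm_mult)
    then have "norm (f z) * norm (G z) \<le> M"
      using M(2) by (simp add: norm_mult)
    have "norm (of_real C :: complex) = C"
      using M(1) \<epsilon> by (simp only: norm_of_real) (simp add: C_def)
    moreover have "norm (f z - of_real C) < 1"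
      using f_large[OF \<open>\<zeta> \<in> K\<close>] by (simp add: z_def s_def)
    ultimately have "C - norm (f z) < 1"
      using norm_triangle_ineq2[of "of_real C" "f z"] norm_minus_commute[of "of_real C" "f z"]
      by linarith
    then have "M / \<epsilon> < norm (f z)"
      by (simp add: C_def)
    show "norm (G (of_real s * \<zeta>)) \<le> \<epsilon>"
    proof (rule ccontr)
      assume "\<not> ?thesis"
      then have "M / \<epsilon> * \<epsilon> < norm (f z) * norm (G z)"
        using \<open>M / \<epsilon> < norm (f z)\<close> divide_nonneg_pos[OF M(1) \<epsilon>] \<epsilon>
        by (intro mult_strict_mono) (auto simp: z_def)
      then show False
        using \<open>norm (f z) * norm (G z) \<le> M\<close> \<epsilon> by simp
    qed
  qed
qed

lemma U_A_multiplier_vanishes_at_0: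
  fixes f G :: "complex \<Rightarrow> complex"
  assumes f: "f \<in> U_A r" and r: "\<And>n. r n < 1" "r \<longlonglongrightarrow> 1"
    and G: "G holomorphic_on ball 0 1" "\<And>z. z \<in> ball 0 1 \<Longrightarrow> norm (G z) \<le> 1"
    and \<Omega>: "open \<Omega>" "\<Omega> \<subseteq> ball 0 1"
    and \<eta>: "\<eta> \<in> sphere 0 1" "d > 0" "ball \<eta> d \<inter> closure \<Omega> = {}"
    and \<zeta>0: "\<zeta>0 \<in> sphere 0 1" "0 < d0" "d0 \<le> 1" "ball \<zeta>0 d0 \<inter> ball 0 1 \<subseteq> \<Omega>"
    and M: "1 \<le> M" "\<And>z. z \<in> frontier \<Omega> \<inter> ball 0 1 \<Longrightarrow> norm (f z * G z) \<le> M"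
  shows "G 0 = 0"
proof (rule vanishes_at_0_if_small_on_arcs[OF G \<zeta>0(1)])
  show "0 < d0 / 2"
    using \<zeta>0(2) by simp
  fix \<epsilon> :: real assume "\<epsilon> > 0"
  have bound: "norm (f z * G z) \<le> M" if "z \<in> ball \<zeta>0 d0 \<inter> ball 0 1" for z
    using U_A_mult_bounded_on_region[OF f r G \<Omega> \<eta> M, of z] that \<zeta>0(4) by blast
  have "0 \<le> M"
    using M(1) by simp
  obtain s where "0 < s" "s < 1"
    "\<And>\<zeta>. \<zeta> \<in> sphere 0 1 \<inter> cball \<zeta>0 (d0 / 2) \<Longrightarrow> norm (G (of_real s * \<zeta>)) \<le> \<epsilon>"
    using U_A_mult_bounded_imp_small_on_arc[OF f r \<zeta>0(1-3) \<open>0 \<le> M\<close> bound \<open>\<epsilon> > 0\<close>] by blast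
  then show "\<exists>s. 0 < s \<and> s < 1 \<and> (\<forall>\<zeta>\<in>sphere 0 1 \<inter> cball \<zeta>0 (d0 / 2). norm (G (of_real s * \<zeta>)) \<le> \<epsilon>)"
    by blast
qed

lemma U_A_mult_bounded_on_curves_vanishes_at_0:
  fixes f G :: "complex \<Rightarrow> complex" and \<gamma>1 \<gamma>2 :: "real \<Rightarrow> complex"
  assumes f: "f \<in> U_A r" and r: "\<And>n. r n < 1" "r \<longlonglongrightarrow> 1"
    and \<gamma>1: "continuous_on {0..<1} \<gamma>1" "\<gamma>1 ` {0..<1} \<subseteq> ball 0 1" "(\<gamma>1 \<longlongrightarrow> \<zeta>1) (at_left 1)"
    and \<gamma>2: "continuous_on {0..<1} \<gamma>2" "\<gamma>2 ` {0..<1} \<subseteq> ball 0 1" "(\<gamma>2 \<longlongrightarrow> \<zeta>2) (at_left 1)"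
    and \<zeta>: "\<zeta>1 \<in> sphere 0 1" "\<zeta>2 \<in> sphere 0 1" "\<zeta>1 \<noteq> \<zeta>2"
    and G: "G holomorphic_on ball 0 1" "\<And>z. z \<in> ball 0 1 \<Longrightarrow> norm (G z) \<le> 1"
    and bound: "\<And>z. z \<in> \<gamma>1 ` {0..<1} \<union> \<gamma>2 ` {0..<1} \<Longrightarrow> norm (f z * G z) \<le> 1"
  shows "G 0 = 0"
proof -
  obtain \<Omega> \<eta> d \<zeta>0 d0 where \<Omega>: "open \<Omega>" "\<Omega> \<subseteq> ball 0 1"
    and frontier:
      "frontier \<Omega> \<inter> ball 0 1 \<subseteq> \<gamma>1 ` {0..<1} \<union> \<gamma>2 ` {0..<1} \<union> closed_segment (\<gamma>1 0) (\<gamma>2 0)"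
    and \<eta>: "\<eta> \<in> sphere 0 1" "d > 0" "ball \<eta> d \<inter> closure \<Omega> = {}"
    and \<zeta>0: "\<zeta>0 \<in> sphere 0 1" "d0 > 0" "d0 \<le> 1" "ball \<zeta>0 d0 \<inter> ball 0 1 \<subseteq> \<Omega>"
    by (rule region_between_curves[OF \<gamma>1 \<gamma>2 \<zeta>])
  have "closed_segment (\<gamma>1 0) (\<gamma>2 0) \<subseteq> ball 0 1"
    using \<gamma>1(2) \<gamma>2(2) by (intro closed_segment_subset) (auto simp: image_subset_iff)
  moreover have "(\<lambda>z. f z * G z) holomorphic_on ball 0 1"
    using f G(1) by (auto simp: U_A_def intro!: holomorphic_intros)
  ultimately have "continuous_on (closed_segment (\<gamma>1 0) (\<gamma>2 0)) (\<lambda>z. f z * G z)"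
    by (meson holomorphic_on_imp_continuous_on holomorphic_on_subset)
  then obtain M where M: "1 \<le> M" "\<And>z. z \<in> \<gamma>1 ` {0..<1} \<union> \<gamma>2 ` {0..<1} \<union>
      closed_segment (\<gamma>1 0) (\<gamma>2 0) \<Longrightarrow> norm (f z * G z) \<le> M"
    using bounded_on_Un_compact[where F="\<lambda>z. f z * G z", OF _ compact_segment bound] by blast
  show ?thesis
  proof (rule U_A_multiplier_vanishes_at_0[OF f r G \<Omega> \<eta> \<zeta>0 M(1)])
    fix z assume "z \<in> frontier \<Omega> \<inter> ball 0 1"
    then show "norm (f z * G z) \<le> M"
      using frontier by (intro M(2)) blast
  qed
qed

theorem proposition3p12:
  fixes r :: "nat \<Rightarrow> real"
    and \<gamma>1 \<gamma>2 :: "real \<Rightarrow> complex"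
    and \<zeta>1 \<zeta>2 :: complex
    and h :: "complex \<Rightarrow> real"
  assumes r_mono: "incseq r"
    and r_range: "\<And>n. r n \<in> {0..<1}"
    and r_lim: "r \<longlonglongrightarrow> 1"
    and \<gamma>1_cont: "continuous_on {0..<1} \<gamma>1"
    and \<gamma>2_cont: "continuous_on {0..<1} \<gamma>2"
    and \<gamma>1_in: "\<gamma>1 ` {0..<1} \<subseteq> ball 0 1"
    and \<gamma>2_in: "\<gamma>2 ` {0..<1} \<subseteq> ball 0 1"
    and disj: "\<gamma>1 ` {0..<1} \<inter> \<gamma>2 ` {0..<1} = {}"
    and \<zeta>1: "\<zeta>1 \<in> sphere 0 1" and \<zeta>2: "\<zeta>2 \<in> sphere 0 1" and \<zeta>_ne: "\<zeta>1 \<noteq> \<zeta>2"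
    and \<gamma>1_lim: "(\<gamma>1 \<longlongrightarrow> \<zeta>1) (at_left 1)"
    and \<gamma>2_lim: "(\<gamma>2 \<longlongrightarrow> \<zeta>2) (at_left 1)"
    and h_harm: "harmonic_on h (ball 0 1)"
    and h_pos: "\<And>z. z \<in> ball 0 1 \<Longrightarrow> h z > 0"
  shows "\<not> (\<exists>f\<in>U_A r. \<forall>z \<in> \<gamma>1 ` {0..<1} \<union> \<gamma>2 ` {0..<1}. norm (f z) \<le> exp (h z))"
proof
  assume "\<exists>f\<in>U_A r. \<forall>z \<in> \<gamma>1 ` {0..<1} \<union> \<gamma>2 ` {0..<1}. norm (f z) \<le> exp (h z)"
  then obtain f where f: "f \<in> U_A r"
    and f_le: "\<And>z. z \<in> \<gamma>1 ` {0..<1} \<union> \<gamma>2 ` {0..<1} \<Longrightarrow> norm (f z) \<le> exp (h z)"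
    by blast
  obtain G where G: "G holomorphic_on ball 0 1"
    and norm_G: "\<And>z. z \<in> ball 0 1 \<Longrightarrow> norm (G z) = exp (- h z)" and "G 0 \<noteq> 0"
    using harmonic_on_convex_imp_norm_exp_holomorphic[OF h_harm convex_ball] by blast
  have "norm (G z) \<le> 1" if "z \<in> ball 0 1" for z
    using norm_G[OF that] h_pos[OF that] by simp
  moreover have "norm (f z * G z) \<le> 1" if "z \<in> \<gamma>1 ` {0..<1} \<union> \<gamma>2 ` {0..<1}" for z
  proof -
    have "norm (f z * G z) \<le> exp (h z) * exp (- h z)"
      using that f_le norm_G \<gamma>1_in \<gamma>2_in by (auto simp: norm_mult intro!: mult_right_mono)
    then show ?thesis
      by (simp add: exp_minus)
  qed
  moreover have "r n < 1" for n
    using r_range[of n] by simp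
  ultimately have "G 0 = 0"
    using U_A_mult_bounded_on_curves_vanishes_at_0[OF f _ r_lim \<gamma>1_cont \<gamma>1_in \<gamma>1_lim
        \<gamma>2_cont \<gamma>2_in \<gamma>2_lim \<zeta>1 \<zeta>2 \<zeta>_ne G] by blast
  with \<open>G 0 \<noteq> 0\<close> show False
    by blast
qed

end
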